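(* Let $\mathbb{X}$ be a separable metric space which is a Baire space, $f:\mathbb{X}\to\mathbb{X}$ continuous, and $\mathbb{X}_0=\{x\in\mathbb{X}:\overline{W_f^s(x)}=\mathbb{X}\}$. Then, generically on $\mathbb{X}$, $$\mho_f(x)\supset\{\mu\in\mathcal{M}^1(f):\beta_f(\mu)\cap\mathbb{X}_0\ne\emptyset\}\supset\{\mu\in\mathcal{M}^1_e(f):\mu(\mathbb{X}_0)>0\}.$$
   Context: Baire space: countable intersections of open dense sets are dense; generically: except on a meager set (countable union of nowhere dense sets). $W_f^s(x)=\{y:\lim_n d(f^n(y),f^n(x))=0\}$. $\mathcal{M}^1(f)$ ($\mathcal{M}^1_e(f)$): $f$-invariant (ergodic invariant) Borel probabilities. $\mho_f(x)$, the statistical spectrum of $x$, is the set of accumulation points in the weak* topology of $\frac1n\sum_{j=0}^{n-1}\delta_{f^j(x)}$. The basin of $\mu$ is $\beta_f(\mu)=\{x:\frac1n\sum_{j=0}^{n-1}\delta_{f^j(x)}\to\mu\text{ weak*}\}$. *)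

theory Defs
  imports "HOL-Probability.Probability"
begin

definition baire_space :: "'a::topological_space itself \<Rightarrow> bool" where
  "baire_space _ \<longleftrightarrow>
     (\<forall>\<U> :: 'a set set. countable \<U> \<and> (\<forall>U\<in>\<U>. open U \<and> closure U = UNIV)
        \<longrightarrow> closure (\<Inter>\<U>) = UNIV)"

definition nowhere_dense :: "'a::topological_space set \<Rightarrow> bool" where
  "nowhere_dense S \<longleftrightarrow> interior (closure S) = {}"

definition meager :: "'a::topological_space set \<Rightarrow> bool" where
  "meager S \<longleftrightarrow> (\<exists>\<F>. countable \<F> \<and> (\<forall>T\<in>\<F>. nowhere_dense T) \<and> S \<subseteq> \<Union>\<F>)"

definition generically :: "('a::topological_space \<Rightarrow> bool) \<Rightarrow> bool" where
  "generically P \<longleftrightarrow> meager {x. \<not> P x}"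

definition stable_set :: "('a::metric_space \<Rightarrow> 'a) \<Rightarrow> 'a \<Rightarrow> 'a set" where
  "stable_set f x = {y. (\<lambda>n. dist ((f ^^ n) y) ((f ^^ n) x)) \<longlonglongrightarrow> 0}"

definition borel_probs :: "'a::topological_space measure set" where
  "borel_probs = {M. prob_space M \<and> sets M = sets borel}"

definition invariant_probs :: "('a::topological_space \<Rightarrow> 'a) \<Rightarrow> 'a measure set" where
  "invariant_probs f = {M \<in> borel_probs.
      \<forall>A \<in> sets borel. measure M (f -` A) = measure M A}"

definition ergodic_probs :: "('a::topological_space \<Rightarrow> 'a) \<Rightarrow> 'a measure set" where
  "ergodic_probs f = {M \<in> invariant_probs f.
      \<forall>A \<in> sets borel. f -` A = A \<longrightarrow> measure M A = 0 \<or> measure M A = 1}"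

text \<open>Bounded continuous real test functions (defining the weak* topology).\<close>
definition bcontinuous :: "('a::topological_space \<Rightarrow> real) set" where
  "bcontinuous = {g. continuous_on UNIV g \<and> bounded (range g)}"

text \<open>Integral of g against the empirical measure
  (1/n) \<Sum>_{j<n} \<delta>_{f^j x}.\<close>
definition emp_avg :: "('a \<Rightarrow> 'a) \<Rightarrow> 'a \<Rightarrow> nat \<Rightarrow> ('a \<Rightarrow> real) \<Rightarrow> real" where
  "emp_avg f x n g = (\<Sum>j<n. g ((f ^^ j) x)) / real n"

text \<open>Statistical spectrum: weak* accumulation points of the empirical measures,
  i.e. every basic weak* neighbourhood of \<mu> (finitely many bounded continuous
  test functions, radius \<epsilon>) contains the n-th empirical measure for infinitely many n.\<close>
definition stat_spectrum :: "('a::topological_space \<Rightarrow> 'a) \<Rightarrow> 'a \<Rightarrow> 'a measure set" where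
  "stat_spectrum f x = {\<mu> \<in> borel_probs.
      \<forall>G e. finite G \<and> G \<subseteq> bcontinuous \<and> e > 0 \<longrightarrow>
        (\<exists>\<^sub>F n in sequentially. \<forall>g\<in>G. \<bar>emp_avg f x n g - integral\<^sup>L \<mu> g\<bar> < e)}"

definition basin :: "('a::topological_space \<Rightarrow> 'a) \<Rightarrow> 'a measure \<Rightarrow> 'a set" where
  "basin f \<mu> = {x. \<forall>g\<in>bcontinuous. (\<lambda>n. emp_avg f x n g) \<longlonglongrightarrow> integral\<^sup>L \<mu> g}"

text \<open>Outer measure positivity: S is not contained in any measurable null set
  (coincides with measure M S > 0 for measurable S).\<close>
definition outer_pos :: "'a measure \<Rightarrow> 'a set \<Rightarrow> bool" where
  "outer_pos M S \<longleftrightarrow> \<not> (\<exists>N\<in>sets M. S \<subseteq> N \<and> measure M N = 0)"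

end

theory Submission
  imports Defs
begin

text \<open>Let \<mu> be invariant with a basin point y in X0. Every z in the dense set W^s(y) has the
  same asymptotic averages as y for Lipschitz observables, so for finitely many test functions the
  open set of points whose empirical averages return infinitely often close to those of \<mu> is
  dense. Countably many Lipschitz test functions control weak* closeness, and countably many
  measures are dense among the relevant ones for this closeness, so the exceptional set is a
  countable union of nowhere dense sets. The second inclusion is Birkhoff's ergodic theorem:
  almost every point lies in the basin of an ergodic \<mu>, so a set of positive outer measure
  meets it.\<close>

section \<open>Birkhoff sums and the maximal ergodic inequality\<close>

lemma borel_probs_measurable:
  "\<mu> \<in> borel_probs \<Longrightarrow> g \<in> borel_measurable borel \<Longrightarrow> g \<in> borel_measurable \<mu>"
  using measurable_cong_sets[of \<mu> borel borel borel] by (auto simp: borel_probs_def)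

lemma integrable_bounded_borel:
  fixes g :: "'a::topological_space \<Rightarrow> real"
  assumes "\<mu> \<in> borel_probs" "g \<in> borel_measurable borel" "\<And>x. \<bar>g x\<bar> \<le> C"
  shows "integrable \<mu> g"
proof -
  interpret prob_space \<mu> using assms(1) by (simp add: borel_probs_def)
  show ?thesis
    using assms by (intro integrable_const_bound[of g C]) (auto intro: borel_probs_measurable)
qed

lemma integral_invariant_comp:
  fixes h :: "'a::topological_space \<Rightarrow> real"
  assumes inv: "\<mu> \<in> invariant_probs f" and f: "f \<in> borel_measurable borel"
    and h: "h \<in> borel_measurable borel"
  shows "(\<integral>x. h (f x) \<partial>\<mu>) = (\<integral>x. h x \<partial>\<mu>)"
proof -
  have sets: "sets \<mu> = sets borel" and "prob_space \<mu>"
    using inv by (auto simp: invariant_probs_def borel_probs_def)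
  then interpret prob_space \<mu> by simp
  have space: "space \<mu> = UNIV" using sets_eq_imp_space_eq[OF sets] by simp
  have f_meas: "f \<in> measurable \<mu> \<mu>" using f by (simp add: measurable_cong_sets[OF sets sets])
  have "distr \<mu> \<mu> f = \<mu>"
  proof (rule measure_eqI)
    fix A assume "A \<in> sets (distr \<mu> \<mu> f)"
    then have A: "A \<in> sets borel" using sets by simp
    have "emeasure (distr \<mu> \<mu> f) A = measure \<mu> (f -` A)"
      using A sets space by (simp add: emeasure_distr[OF f_meas] emeasure_eq_measure)
    also have "\<dots> = measure \<mu> A" using inv A by (auto simp: invariant_probs_def)
    finally show "emeasure (distr \<mu> \<mu> f) A = emeasure \<mu> A" by (simp add: emeasure_eq_measure)
  qed simp
  moreover have "h \<in> borel_measurable \<mu>" using h by (simp add: measurable_cong_sets[OF sets])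
  ultimately show ?thesis using integral_distr[OF f_meas] by metis
qed

definition birkhoff_sum :: "('a \<Rightarrow> 'a) \<Rightarrow> ('a \<Rightarrow> real) \<Rightarrow> nat \<Rightarrow> 'a \<Rightarrow> real" where
  "birkhoff_sum f g n x = (\<Sum>j<n. g ((f ^^ j) x))"

primrec max_birkhoff_sum :: "('a \<Rightarrow> 'a) \<Rightarrow> ('a \<Rightarrow> real) \<Rightarrow> nat \<Rightarrow> 'a \<Rightarrow> real" where
  "max_birkhoff_sum f g 0 x = 0"
| "max_birkhoff_sum f g (Suc N) x = max (max_birkhoff_sum f g N x) (birkhoff_sum f g (Suc N) x)"

lemma emp_avg_eq_birkhoff_sum: "emp_avg f x n g = birkhoff_sum f g n x / real n"
  by (simp add: emp_avg_def birkhoff_sum_def)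

lemma birkhoff_sum_0 [simp]: "birkhoff_sum f g 0 x = 0"
  by (simp add: birkhoff_sum_def)

lemma birkhoff_sum_Suc_shift: "birkhoff_sum f g (Suc n) x = g x + birkhoff_sum f g n (f x)"
  unfolding birkhoff_sum_def
  by (simp only: sum.lessThan_Suc_shift) (simp add: funpow_Suc_right del: funpow.simps)

lemma abs_birkhoff_sum_le:
  assumes "\<And>y. \<bar>g y\<bar> \<le> C"
  shows "\<bar>birkhoff_sum f g n x\<bar> \<le> real n * C"
  unfolding birkhoff_sum_def
  by (rule order_trans[OF sum_abs])
    (use assms sum_mono[of "{..<n}" "\<lambda>j. \<bar>g ((f ^^ j) x)\<bar>" "\<lambda>_. C"] in auto)

lemma birkhoff_sum_le_max: "n \<le> N \<Longrightarrow> birkhoff_sum f g n x \<le> max_birkhoff_sum f g N x"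
  by (induction N) (auto simp: le_Suc_eq)

lemma max_birkhoff_sum_attained: "\<exists>n\<le>N. max_birkhoff_sum f g N x = birkhoff_sum f g n x"
proof (induction N)
  case (Suc N)
  then obtain n where "n \<le> N" "max_birkhoff_sum f g N x = birkhoff_sum f g n x" by blast
  then show ?case by (auto simp: max_def intro: le_SucI)
qed simp

lemma max_birkhoff_sum_pos_iff:
  "max_birkhoff_sum f g N x > 0 \<longleftrightarrow> (\<exists>n\<le>N. birkhoff_sum f g n x > 0)"
proof
  assume "max_birkhoff_sum f g N x > 0"
  then show "\<exists>n\<le>N. birkhoff_sum f g n x > 0"
    using max_birkhoff_sum_attained[of N f g x] by auto
next
  assume "\<exists>n\<le>N. birkhoff_sum f g n x > 0"
  then obtain n where "n \<le> N" "birkhoff_sum f g n x > 0" by blast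
  then show "max_birkhoff_sum f g N x > 0" using birkhoff_sum_le_max[of n N f g x] by linarith
qed

lemma abs_max_birkhoff_sum_le:
  assumes "\<And>y. \<bar>g y\<bar> \<le> C"
  shows "\<bar>max_birkhoff_sum f g N x\<bar> \<le> real N * C"
proof -
  obtain n where n: "n \<le> N" "max_birkhoff_sum f g N x = birkhoff_sum f g n x"
    using max_birkhoff_sum_attained[of N f g x] by blast
  have "0 \<le> C" using assms[of x] by linarith
  then have "real n * C \<le> real N * C" using n(1) by (intro mult_right_mono) auto
  then show ?thesis using n(2) abs_birkhoff_sum_le[of g C f n x, OF assms] by simp
qed

text \<open>Garsia's trick: where the maximal sum is positive it is attained at a positive time n,
  and the sum up to n is g x plus a sum along the orbit of f x.\<close>
lemma max_birkhoff_sum_diff_le: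
  "max_birkhoff_sum f g N x - max_birkhoff_sum f g N (f x)
     \<le> (if max_birkhoff_sum f g N x > 0 then g x else 0)"
proof (cases "max_birkhoff_sum f g N x > 0")
  case True
  obtain n where n: "n \<le> N" "max_birkhoff_sum f g N x = birkhoff_sum f g n x"
    using max_birkhoff_sum_attained[of N f g x] by blast
  with True obtain m where m: "n = Suc m" by (cases n) auto
  have "birkhoff_sum f g m (f x) \<le> max_birkhoff_sum f g N (f x)"
    using n(1) m by (intro birkhoff_sum_le_max) simp
  then show ?thesis using True n(2) m by (simp add: birkhoff_sum_Suc_shift)
next
  case False
  then show ?thesis using birkhoff_sum_le_max[of 0 N f g x] birkhoff_sum_le_max[of 0 N f g "f x"]
    by simp
qed

lemma birkhoff_sum_borel [measurable]:
  assumes "f \<in> borel_measurable borel" "g \<in> borel_measurable borel"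
  shows "birkhoff_sum f g n \<in> borel_measurable borel"
  unfolding birkhoff_sum_def using assms by measurable

lemma max_birkhoff_sum_borel [measurable]:
  assumes "f \<in> borel_measurable borel" "g \<in> borel_measurable borel"
  shows "max_birkhoff_sum f g N \<in> borel_measurable borel"
  by (induction N) (use assms in simp_all)

lemma maximal_ergodic_inequality_finite:
  fixes g :: "'a::topological_space \<Rightarrow> real"
  assumes inv: "\<mu> \<in> invariant_probs f" and f: "f \<in> borel_measurable borel"
    and g: "g \<in> borel_measurable borel" and g_bound: "\<And>x. \<bar>g x\<bar> \<le> C"
  shows "0 \<le> (\<integral>x. (if max_birkhoff_sum f g N x > 0 then g x else 0) \<partial>\<mu>)"
proof -
  have \<mu>: "\<mu> \<in> borel_probs" using inv by (simp add: invariant_probs_def)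
  have C: "0 \<le> C" using g_bound[of undefined] by linarith
  note [measurable] = f g
  let ?M = "max_birkhoff_sum f g N"
  have M_meas: "?M \<in> borel_measurable borel" by measurable
  have int_M: "integrable \<mu> ?M"
    by (rule integrable_bounded_borel[OF \<mu> M_meas abs_max_birkhoff_sum_le[OF g_bound]])
  have int_Mf: "integrable \<mu> (\<lambda>x. ?M (f x))"
    by (rule integrable_bounded_borel[OF \<mu> _ abs_max_birkhoff_sum_le[OF g_bound]]) measurable
  have "0 = (\<integral>x. ?M x - ?M (f x) \<partial>\<mu>)"
    using integral_invariant_comp[OF inv f M_meas] int_M int_Mf by simp
  also have "\<dots> \<le> (\<integral>x. (if ?M x > 0 then g x else 0) \<partial>\<mu>)"
  proof (rule integral_mono)
    show "integrable \<mu> (\<lambda>x. if ?M x > 0 then g x else 0)"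
      by (rule integrable_bounded_borel[OF \<mu>, of _ C]) (use g_bound C in auto)
    show "?M x - ?M (f x) \<le> (if ?M x > 0 then g x else 0)" for x
      by (rule max_birkhoff_sum_diff_le)
  qed (use int_M int_Mf in simp)
  finally show ?thesis .
qed

lemma eventually_ex_le_iff_ex: "eventually (\<lambda>N. (\<exists>n\<le>N. P n) \<longleftrightarrow> (\<exists>n. P n)) sequentially"
proof (cases "\<exists>n. P n")
  case True
  then obtain n where "P n" by blast
  then show ?thesis unfolding eventually_sequentially by (intro exI[of _ n]) auto
qed auto

theorem maximal_ergodic_inequality:
  fixes g :: "'a::topological_space \<Rightarrow> real"
  assumes inv: "\<mu> \<in> invariant_probs f" and f: "f \<in> borel_measurable borel"
    and g: "g \<in> borel_measurable borel" and g_bound: "\<And>x. \<bar>g x\<bar> \<le> C"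
  shows "0 \<le> (\<integral>x. (if \<exists>n. birkhoff_sum f g n x > 0 then g x else 0) \<partial>\<mu>)"
proof -
  have \<mu>: "\<mu> \<in> borel_probs" using inv by (simp add: invariant_probs_def)
  then interpret prob_space \<mu> by (simp add: borel_probs_def)
  have C: "0 \<le> C" using g_bound[of undefined] by linarith
  note [measurable] = f g
  define s where "s N x = (if max_birkhoff_sum f g N x > 0 then g x else 0)" for N x
  have lim: "(\<lambda>N. integral\<^sup>L \<mu> (s N)) \<longlonglongrightarrow> (\<integral>x. (if \<exists>n. birkhoff_sum f g n x > 0 then g x else 0) \<partial>\<mu>)"
  proof (rule integral_dominated_convergence[where w="\<lambda>_. C"])
    show "AE x in \<mu>. (\<lambda>N. s N x) \<longlonglongrightarrow> (if \<exists>n. birkhoff_sum f g n x > 0 then g x else 0)"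
    proof (intro AE_I2 tendsto_eventually)
      fix x
      show "eventually (\<lambda>N. s N x = (if \<exists>n. birkhoff_sum f g n x > 0 then g x else 0)) sequentially"
        using eventually_ex_le_iff_ex[of "\<lambda>n. birkhoff_sum f g n x > 0"]
        by eventually_elim (simp add: s_def max_birkhoff_sum_pos_iff)
    qed
    show "s N \<in> borel_measurable \<mu>" for N
      unfolding s_def by (rule borel_probs_measurable[OF \<mu>]) measurable
    show "(\<lambda>x. if \<exists>n. birkhoff_sum f g n x > 0 then g x else 0) \<in> borel_measurable \<mu>"
      by (rule borel_probs_measurable[OF \<mu>]) measurable
    show "AE x in \<mu>. norm (s N x) \<le> C" for N
      using g_bound C by (simp add: s_def)
  qed simp
  have "\<forall>N. 0 \<le> integral\<^sup>L \<mu> (s N)"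
    unfolding s_def using maximal_ergodic_inequality_finite[OF inv f g g_bound] by blast
  then show ?thesis by (intro LIMSEQ_le_const[OF lim]) auto
qed

section \<open>Birkhoff's ergodic theorem\<close>

lemma emp_avg_mono: "(\<And>y. g y \<le> h y) \<Longrightarrow> emp_avg f x n g \<le> emp_avg f x n h"
  unfolding emp_avg_def by (intro divide_right_mono sum_mono) auto

lemma emp_avg_uminus: "emp_avg f x n (\<lambda>y. - g y) = - emp_avg f x n g"
  by (simp add: emp_avg_def sum_negf)

lemma abs_emp_avg_le:
  assumes "\<And>y. \<bar>g y\<bar> \<le> C"
  shows "\<bar>emp_avg f x n g\<bar> \<le> C"
proof (cases "n = 0")
  case True
  then show ?thesis using assms[of x] by (simp add: emp_avg_def)
next
  case False
  then show ?thesis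
    using abs_birkhoff_sum_le[of g C f n x, OF assms]
    by (simp add: emp_avg_eq_birkhoff_sum abs_divide divide_le_eq mult.commute)
qed

lemma emp_avg_borel [measurable]:
  assumes "f \<in> borel_measurable borel" "g \<in> borel_measurable borel"
  shows "(\<lambda>x. emp_avg f x n g) \<in> borel_measurable borel"
  unfolding emp_avg_eq_birkhoff_sum using assms by measurable

lemma emp_avg_shift_tendsto:
  assumes g: "\<And>y. \<bar>g y\<bar> \<le> C"
  shows "(\<lambda>n. emp_avg f x (Suc n) g - emp_avg f (f x) n g) \<longlonglongrightarrow> 0"
proof (rule Lim_null_comparison)
  show "(\<lambda>n. 2 * C / real (Suc n)) \<longlonglongrightarrow> 0"
    using LIMSEQ_Suc[OF lim_const_over_n[of "2 * C"]] by simp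
  have "emp_avg f x (Suc n) g - emp_avg f (f x) n g = (g x - emp_avg f (f x) n g) / real (Suc n)" for n
    by (cases "n = 0") (simp_all add: emp_avg_eq_birkhoff_sum birkhoff_sum_Suc_shift field_simps)
  moreover have "\<bar>g x - emp_avg f (f x) n g\<bar> \<le> 2 * C" for n
    using g[of x] abs_emp_avg_le[of g C f "f x" n, OF g] by linarith
  ultimately show "\<forall>\<^sub>F n in sequentially.
      norm (emp_avg f x (Suc n) g - emp_avg f (f x) n g) \<le> 2 * C / real (Suc n)"
    by (simp add: abs_divide divide_right_mono)
qed

lemma frequently_sequentially_Suc:
  "(\<exists>\<^sub>F n in sequentially. P (Suc n)) \<longleftrightarrow> (\<exists>\<^sub>F n in sequentially. P n)"
  using eventually_sequentially_Suc[of "\<lambda>n. \<not> P n"] by (simp add: frequently_def)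

lemma frequently_above_transfer:
  fixes a b :: "nat \<Rightarrow> real" and t :: real
  assumes lim: "(\<lambda>n. a n - b n) \<longlonglongrightarrow> 0" and q: "t < of_rat q"
    and freq: "\<exists>\<^sub>F n in sequentially. of_rat q < a n"
  shows "\<exists>q'::rat. t < of_rat q' \<and> (\<exists>\<^sub>F n in sequentially. of_rat q' < b n)"
proof -
  obtain q' :: rat where q': "t < of_rat q'" "of_rat q' < (of_rat q :: real)"
    using of_rat_dense[OF q] by blast
  have "\<forall>\<^sub>F n in sequentially. dist (a n - b n) 0 < of_rat q - of_rat q'"
    using tendstoD[OF lim] q'(2) by simp
  then have "\<forall>\<^sub>F n in sequentially. of_rat q < a n \<longrightarrow> of_rat q' < b n"
    by eventually_elim (auto simp: dist_real_def)
  then have "\<exists>\<^sub>F n in sequentially. of_rat q' < b n" using freq by (rule frequently_mp)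
  then show ?thesis using q'(1) by blast
qed

text \<open>The set where the upper limit of the averages exceeds t, with a rational witness so that
  it is visibly Borel.\<close>
definition avg_limsup_above :: "('a \<Rightarrow> 'a) \<Rightarrow> ('a \<Rightarrow> real) \<Rightarrow> real \<Rightarrow> 'a set" where
  "avg_limsup_above f g t =
    {x. \<exists>q::rat. t < of_rat q \<and> (\<exists>\<^sub>F n in sequentially. of_rat q < emp_avg f x n g)}"

lemma avg_limsup_above_vimage:
  assumes g: "\<And>y. \<bar>g y\<bar> \<le> C"
  shows "f -` avg_limsup_above f g t = avg_limsup_above f g t"
proof -
  have "x \<in> avg_limsup_above f g t \<longleftrightarrow> f x \<in> avg_limsup_above f g t" for x
  proof -
    have lim: "(\<lambda>n. emp_avg f x (Suc n) g - emp_avg f (f x) n g) \<longlonglongrightarrow> 0"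
      by (rule emp_avg_shift_tendsto[OF g])
    then have lim': "(\<lambda>n. emp_avg f (f x) n g - emp_avg f x (Suc n) g) \<longlonglongrightarrow> 0"
      using tendsto_minus[OF lim] by simp
    have "x \<in> avg_limsup_above f g t \<longleftrightarrow>
        (\<exists>q::rat. t < of_rat q \<and> (\<exists>\<^sub>F n in sequentially. of_rat q < emp_avg f x (Suc n) g))"
      unfolding avg_limsup_above_def
      by (simp add: frequently_sequentially_Suc[where P = "\<lambda>n. _ < emp_avg f x n g"])
    then show ?thesis
      unfolding avg_limsup_above_def
      using frequently_above_transfer[OF lim, of t] frequently_above_transfer[OF lim', of t] by blast
  qed
  then show ?thesis by auto
qed

lemma avg_limsup_above_borel:
  assumes [measurable]: "f \<in> borel_measurable borel" "g \<in> borel_measurable borel"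
  shows "avg_limsup_above f g t \<in> sets borel"
proof -
  have "avg_limsup_above f g t = {x \<in> space borel. \<exists>q::rat. t < of_rat q \<and>
      (\<forall>N::nat. \<exists>n::nat. N \<le> n \<and> of_rat q < emp_avg f x n g)}"
    by (auto simp: avg_limsup_above_def frequently_sequentially)
  also have "\<dots> \<in> sets borel" by measurable
  finally show ?thesis .
qed

lemma avg_limsup_above_subset:
  "avg_limsup_above f g t \<subseteq> {x. \<exists>n. birkhoff_sum f (\<lambda>y. g y - t) n x > 0}"
proof
  fix x assume "x \<in> avg_limsup_above f g t"
  then obtain q :: rat where q: "t < of_rat q" "\<exists>\<^sub>F n in sequentially. of_rat q < emp_avg f x n g"
    unfolding avg_limsup_above_def by blast
  then obtain n where n: "n \<ge> 1" "of_rat q < emp_avg f x n g"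
    unfolding frequently_sequentially by blast
  have "birkhoff_sum f (\<lambda>y. g y - t) n x = real n * (emp_avg f x n g - t)"
    using n(1) by (simp add: birkhoff_sum_def emp_avg_def sum_subtractf field_simps)
  also have "\<dots> > 0" using n q by (intro mult_pos_pos) auto
  finally show "x \<in> {x. \<exists>n. birkhoff_sum f (\<lambda>y. g y - t) n x > 0}" by blast
qed

text \<open>The set is invariant, so by ergodicity it is null or conull; if it were conull, the maximal
  ergodic inequality for g - t would give t \<le> \<integral>g.\<close>
lemma avg_limsup_above_null:
  fixes g :: "'a::topological_space \<Rightarrow> real"
  assumes erg: "\<mu> \<in> ergodic_probs f" and f: "f \<in> borel_measurable borel"
    and g: "g \<in> borel_measurable borel" and g_bound: "\<And>y. \<bar>g y\<bar> \<le> C"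
    and t: "integral\<^sup>L \<mu> g < t"
  shows "avg_limsup_above f g t \<in> null_sets \<mu>"
proof -
  let ?A = "avg_limsup_above f g t"
  have inv: "\<mu> \<in> invariant_probs f" using erg by (simp add: ergodic_probs_def)
  then have \<mu>: "\<mu> \<in> borel_probs" by (simp add: invariant_probs_def)
  then have sets: "sets \<mu> = sets borel" by (simp add: borel_probs_def)
  interpret prob_space \<mu> using \<mu> by (simp add: borel_probs_def)
  note [measurable] = f g
  have A: "?A \<in> sets borel" by (rule avg_limsup_above_borel[OF f g])
  have "measure \<mu> ?A \<noteq> 1"
  proof
    assume "measure \<mu> ?A = 1"
    then have "AE x in \<mu>. x \<in> ?A" by (rule AE_prob_1)
    then have AE_pos: "AE x in \<mu>. \<exists>n. birkhoff_sum f (\<lambda>y. g y - t) n x > 0"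
      by eventually_elim (use avg_limsup_above_subset[of f g t] in auto)
    have "0 \<le> (\<integral>x. (if \<exists>n. birkhoff_sum f (\<lambda>y. g y - t) n x > 0 then g x - t else 0) \<partial>\<mu>)"
    proof (rule maximal_ergodic_inequality[OF inv f])
      show "\<bar>g x - t\<bar> \<le> C + \<bar>t\<bar>" for x using g_bound[of x] by linarith
    qed simp
    also have "\<dots> = (\<integral>x. g x - t \<partial>\<mu>)"
      by (rule integral_cong_AE) (use AE_pos in \<open>auto intro!: borel_probs_measurable[OF \<mu>]\<close>)
    also have "\<dots> = integral\<^sup>L \<mu> g - t"
      using integrable_bounded_borel[OF \<mu> g g_bound] by (simp add: prob_space)
    finally show False using t by simp
  qed
  moreover have "f -` ?A = ?A" by (rule avg_limsup_above_vimage[OF g_bound])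
  then have "measure \<mu> ?A = 0 \<or> measure \<mu> ?A = 1"
    using erg A unfolding ergodic_probs_def by blast
  ultimately show ?thesis using A sets by (simp add: emeasure_eq_measure null_sets_def)
qed

lemma AE_eventually_emp_avg_less:
  fixes g :: "'a::topological_space \<Rightarrow> real"
  assumes erg: "\<mu> \<in> ergodic_probs f" and f: "f \<in> borel_measurable borel"
    and g: "g \<in> borel_measurable borel" and g_bound: "\<And>y. \<bar>g y\<bar> \<le> C"
  shows "AE x in \<mu>. \<forall>a > integral\<^sup>L \<mu> g. eventually (\<lambda>n. emp_avg f x n g < a) sequentially"
proof -
  have "AE x in \<mu>. \<forall>q::rat. integral\<^sup>L \<mu> g < of_rat q \<longrightarrow> x \<notin> avg_limsup_above f g (of_rat q)"
    unfolding AE_all_countable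
    using AE_not_in[OF avg_limsup_above_null[OF erg f g g_bound]] by simp
  then show ?thesis
  proof eventually_elim
    case (elim x)
    show ?case
    proof (intro allI impI)
      fix a assume "integral\<^sup>L \<mu> g < a"
      then obtain q r :: rat
        where "integral\<^sup>L \<mu> g < of_rat q" "of_rat q < (of_rat r :: real)" "of_rat r < a"
        by (metis of_rat_dense)
      with elim have "\<not> (\<exists>\<^sub>F n in sequentially. of_rat r < emp_avg f x n g)"
        unfolding avg_limsup_above_def by blast
      then have "eventually (\<lambda>n. emp_avg f x n g \<le> of_rat r) sequentially"
        by (simp add: not_frequently not_less)
      then show "eventually (\<lambda>n. emp_avg f x n g < a) sequentially"
        by eventually_elim (use \<open>of_rat r < a\<close> in linarith)
    qed
  qed
qed

theorem birkhoff_ergodic: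
  fixes g :: "'a::topological_space \<Rightarrow> real"
  assumes erg: "\<mu> \<in> ergodic_probs f" and f: "f \<in> borel_measurable borel"
    and g: "g \<in> borel_measurable borel" and g_bound: "\<And>y. \<bar>g y\<bar> \<le> C"
  shows "AE x in \<mu>. (\<lambda>n. emp_avg f x n g) \<longlonglongrightarrow> integral\<^sup>L \<mu> g"
proof -
  have "AE x in \<mu>. \<forall>a > integral\<^sup>L \<mu> (\<lambda>x. - g x).
      eventually (\<lambda>n. emp_avg f x n (\<lambda>x. - g x) < a) sequentially"
  proof (rule AE_eventually_emp_avg_less[OF erg f])
    show "(\<lambda>x. - g x) \<in> borel_measurable borel" using g by measurable
    show "\<bar>- g y\<bar> \<le> C" for y using g_bound[of y] by simp
  qed
  then have "AE x in \<mu>. \<forall>a > - integral\<^sup>L \<mu> g.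
      eventually (\<lambda>n. - emp_avg f x n g < a) sequentially"
    by (simp add: emp_avg_uminus)
  with AE_eventually_emp_avg_less[OF erg f g g_bound]
  show ?thesis
  proof eventually_elim
    case (elim x)
    show ?case
    proof (rule order_tendstoI)
      fix a assume "a < integral\<^sup>L \<mu> g"
      then show "eventually (\<lambda>n. a < emp_avg f x n g) sequentially"
        using elim(2)[rule_format, of "- a"] by simp
    qed (use elim(1) in blast)
  qed
qed

section \<open>A countable family of Lipschitz test functions\<close>

lemma bcontinuous_borel: "g \<in> bcontinuous \<Longrightarrow> g \<in> borel_measurable borel"
  unfolding bcontinuous_def by (auto intro: borel_measurable_continuous_onI)

lemma bcontinuous_bound: "g \<in> bcontinuous \<Longrightarrow> \<exists>C. \<forall>y. \<bar>g y\<bar> \<le> C"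
  unfolding bcontinuous_def bounded_iff by auto

lemma bcontinuous_uminus: "g \<in> bcontinuous \<Longrightarrow> (\<lambda>x. - g x) \<in> bcontinuous"
  unfolding bcontinuous_def bounded_iff by (auto intro: continuous_intros)

definition dense_seq :: "nat \<Rightarrow> 'a::metric_space" where
  "dense_seq = from_nat_into (SOME D::'a set. countable D \<and> closure D = UNIV)"

lemma dense_seq_approx:
  assumes sep: "separable_space (euclidean :: 'a::metric_space topology)" and e: "0 < e"
  shows "\<exists>i. dist (dense_seq i) (x::'a) < e"
proof -
  obtain C :: "'a set" where "countable C" "closure C = UNIV"
    using sep unfolding separable_space_def by auto
  define D :: "'a set" where "D = (SOME D::'a set. countable D \<and> closure D = UNIV)"
  have D: "countable D \<and> closure D = UNIV"
    unfolding D_def by (rule someI[of _ C]) (use \<open>countable C\<close> \<open>closure C = UNIV\<close> in blast)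
  have "range (dense_seq :: nat \<Rightarrow> 'a) = D"
    using D unfolding dense_seq_def D_def[symmetric] by (intro range_from_nat_into) auto
  moreover obtain y where "y \<in> D" "dist y x < e"
    using D e closure_approachable[of x D] by auto
  ultimately show ?thesis by (metis rangeE)
qed

text \<open>The code (a, c, i, r, m) stands for the bump that equals c near dense_seq i, equals a
  outside the ball of radius r around it, and interpolates with slope m.\<close>
type_synonym bump_code = "rat \<times> rat \<times> nat \<times> rat \<times> nat"

definition bump :: "bump_code \<Rightarrow> 'a::metric_space \<Rightarrow> real" where
  "bump p x = (case p of (a, c, i, r, m) \<Rightarrow>
    of_rat a + (of_rat c - of_rat a) * min 1 (real m * max 0 (of_rat r - dist x (dense_seq i))))"

lemma bump_lipschitz: "\<exists>C. C-lipschitz_on UNIV (bump p :: 'a::metric_space \<Rightarrow> real)"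
proof -
  obtain a c i r m where p: "p = (a, c, i, r, m)" by (cases p) auto
  define \<phi> where "\<phi> x = min 1 (real m * max 0 (of_rat r - dist x (dense_seq i)))" for x :: 'a
  have "\<bar>\<phi> x - \<phi> y\<bar> \<le> real m * dist x y" for x y :: 'a
  proof -
    have "\<bar>max 0 (of_rat r - dist x (dense_seq i)) - max 0 (of_rat r - dist y (dense_seq i))\<bar> \<le> dist x y"
      using dist_triangle[of x "dense_seq i" y] dist_triangle[of y "dense_seq i" x]
      by (auto simp: dist_commute max_def)
    then have "\<bar>real m * max 0 (of_rat r - dist x (dense_seq i)) - real m * max 0 (of_rat r - dist y (dense_seq i))\<bar>
        \<le> real m * dist x y"
      by (simp add: right_diff_distrib[symmetric] abs_mult mult_left_mono)
    then show ?thesis unfolding \<phi>_def by (auto simp: min_def)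
  qed
  then have "\<bar>bump p x - bump p y\<bar> \<le> \<bar>of_rat c - of_rat a\<bar> * real m * dist x y" for x y :: 'a
    using mult_left_mono[OF _ abs_ge_zero, of "\<bar>\<phi> x - \<phi> y\<bar>" "real m * dist x y" "of_rat c - of_rat a"]
    by (simp add: p bump_def \<phi>_def[symmetric] abs_mult right_diff_distrib[symmetric] mult.assoc)
  then show ?thesis by (intro exI lipschitz_onI) (auto simp: dist_real_def)
qed

lemma abs_bump_le: "\<bar>bump (a, c, i, r, m) x\<bar> \<le> \<bar>of_rat a\<bar> + \<bar>of_rat c\<bar>"
proof -
  define t where "t = min 1 (real m * max 0 (of_rat r - dist x (dense_seq i)))"
  have "0 \<le> t" "t \<le> 1" by (auto simp: t_def)
  then have "\<bar>of_rat a * (1 - t)\<bar> \<le> \<bar>of_rat a\<bar>" "\<bar>of_rat c * t\<bar> \<le> \<bar>of_rat c\<bar>"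
    by (simp_all add: abs_mult mult_left_le)
  moreover have "bump (a, c, i, r, m) x = of_rat a * (1 - t) + of_rat c * t"
    by (simp add: bump_def t_def algebra_simps)
  ultimately show ?thesis by linarith
qed

lemma bump_bounded: "bounded (range (bump p))"
  using abs_bump_le unfolding bounded_iff by (cases p) (auto intro!: exI)

lemma lipschitz_on_Max_image:
  fixes F :: "'b \<Rightarrow> 'a::metric_space \<Rightarrow> real"
  assumes "finite P" "P \<noteq> {}" "\<And>p. p \<in> P \<Longrightarrow> C-lipschitz_on U (F p)"
  shows "C-lipschitz_on U (\<lambda>x. Max ((\<lambda>p. F p x) ` P))"
proof (rule lipschitz_onI)
  show "0 \<le> C" using assms(2,3) lipschitz_on_nonneg by blast
  have le: "Max ((\<lambda>p. F p x) ` P) \<le> Max ((\<lambda>p. F p y) ` P) + C * dist x y" if "x \<in> U" "y \<in> U" for x y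
  proof -
    have "Max ((\<lambda>p. F p x) ` P) \<in> (\<lambda>p. F p x) ` P" using assms(1,2) by (intro Max_in) auto
    then obtain p where p: "p \<in> P" "Max ((\<lambda>p. F p x) ` P) = F p x" by auto
    have "F p x \<le> F p y + C * dist x y"
      using lipschitz_onD[OF assms(3)[OF p(1)] that] by (simp add: dist_real_def)
    moreover have "F p y \<le> Max ((\<lambda>p. F p y) ` P)" using assms(1) p(1) by simp
    ultimately show ?thesis using p(2) by linarith
  qed
  show "dist (Max ((\<lambda>p. F p x) ` P)) (Max ((\<lambda>p. F p y) ` P)) \<le> C * dist x y"
    if "x \<in> U" "y \<in> U" for x y
    using le[OF that] le[OF that(2,1)] by (simp add: dist_real_def dist_commute)
qed

lemma bounded_range_Max_image:
  fixes F :: "'b \<Rightarrow> 'a \<Rightarrow> real"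
  assumes "finite P" "\<And>p. p \<in> P \<Longrightarrow> bounded (range (F p))"
  shows "bounded (range (\<lambda>x. Max ((\<lambda>p. F p x) ` P)))"
proof (cases "P = {}")
  case False
  obtain B where B: "\<And>p x. p \<in> P \<Longrightarrow> \<bar>F p x\<bar> \<le> B p"
    using assms(2) unfolding bounded_iff by (metis real_norm_def rangeI)
  have "\<bar>Max ((\<lambda>p. F p x) ` P)\<bar> \<le> (\<Sum>p\<in>P. B p)" for x
  proof -
    have "Max ((\<lambda>p. F p x) ` P) \<in> (\<lambda>p. F p x) ` P" using assms(1) False by (intro Max_in) auto
    then obtain p where p: "p \<in> P" "Max ((\<lambda>p. F p x) ` P) = F p x" by auto
    have "B p \<le> (\<Sum>p\<in>P. B p)"
      using assms(1) p(1) B by (intro member_le_sum) (auto intro: order_trans[OF abs_ge_zero])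
    then show ?thesis using B[OF p(1), of x] p(2) by linarith
  qed
  then show ?thesis unfolding bounded_iff by auto
qed simp

definition bump_max :: "bump_code list \<Rightarrow> 'a::metric_space \<Rightarrow> real" where
  "bump_max L x = (if L = [] then 0 else Max ((\<lambda>p. bump p x) ` set L))"

lemma bump_le_bump_max: "p \<in> set L \<Longrightarrow> bump p x \<le> bump_max L x"
  by (auto simp: bump_max_def)

lemma bump_max_le: "L \<noteq> [] \<Longrightarrow> (\<And>p. p \<in> set L \<Longrightarrow> bump p x \<le> b) \<Longrightarrow> bump_max L x \<le> b"
  by (auto simp: bump_max_def)

lemma bump_max_lipschitz: "\<exists>C. C-lipschitz_on UNIV (bump_max L :: 'a::metric_space \<Rightarrow> real)"
proof (cases "L = []")
  case True
  then show ?thesis using lipschitz_on_constant by (auto simp: bump_max_def)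
next
  case False
  obtain C where C: "\<And>p. (C p)-lipschitz_on UNIV (bump p :: 'a \<Rightarrow> real)"
    using bump_lipschitz by metis
  have each: "(\<Sum>p\<in>set L. C p)-lipschitz_on UNIV (bump p :: 'a \<Rightarrow> real)" if "p \<in> set L" for p
  proof (rule lipschitz_on_mono[OF C[of p]])
    show "C p \<le> (\<Sum>p\<in>set L. C p)"
      using that lipschitz_on_nonneg[OF C] by (intro member_le_sum) auto
  qed simp
  have "(\<Sum>p\<in>set L. C p)-lipschitz_on UNIV (\<lambda>x::'a. Max ((\<lambda>p. bump p x) ` set L))"
    by (rule lipschitz_on_Max_image[OF _ _ each]) (use False in simp_all)
  then show ?thesis using False unfolding bump_max_def by auto
qed

lemma bump_max_bcontinuous: "(bump_max L :: 'a::metric_space \<Rightarrow> real) \<in> bcontinuous"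
proof -
  obtain C where "C-lipschitz_on UNIV (bump_max L :: 'a \<Rightarrow> real)" using bump_max_lipschitz by blast
  then have "continuous_on UNIV (bump_max L :: 'a \<Rightarrow> real)" by (rule lipschitz_on_continuous_on)
  moreover have "bounded (range (bump_max L :: 'a \<Rightarrow> real))"
  proof (cases "L = []")
    case False
    have "bounded (range (\<lambda>x::'a. Max ((\<lambda>p. bump p x) ` set L)))"
      by (rule bounded_range_Max_image[OF _ bump_bounded]) simp
    then show ?thesis using False unfolding bump_max_def by simp
  qed (simp add: bump_max_def)
  ultimately show ?thesis by (simp add: bcontinuous_def)
qed

lemma bump_below_exists:
  fixes g :: "'a::metric_space \<Rightarrow> real"
  assumes sep: "separable_space (euclidean :: 'a topology)" and g: "g \<in> bcontinuous"
    and C: "\<And>y. \<bar>g y\<bar> \<le> C" and a0: "of_rat a0 < - C" and a: "a < g x"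
  shows "\<exists>p. fst p = a0 \<and> (\<forall>y. bump p y \<le> g y) \<and> a < bump p x"
proof -
  have "max a (of_rat a0) < g x" using a a0 C[of x] by auto
  then obtain c :: rat where c: "max a (of_rat a0) < of_rat c" "of_rat c < g x"
    using of_rat_dense by blast
  have "continuous_on UNIV g" using g by (simp add: bcontinuous_def)
  then obtain \<delta> where \<delta>: "0 < \<delta>" "\<And>y. dist y x < \<delta> \<Longrightarrow> dist (g y) (g x) < g x - of_rat c"
    unfolding continuous_on_iff using c(2) by (metis UNIV_I diff_gt_0_iff_gt)
  obtain r :: rat where r: "0 < (of_rat r :: real)" "of_rat r < \<delta> / 2"
    using of_rat_dense[of 0 "\<delta> / 2"] \<delta>(1) by auto
  obtain i where i: "dist (dense_seq i) x < of_rat r / 2"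
    using dense_seq_approx[OF sep, of "of_rat r / 2" x] r(1) by auto
  obtain m :: nat where m: "2 / of_rat r < real m" using reals_Archimedean2 by blast
  define t where "t y = min 1 (real m * max 0 (of_rat r - dist y (dense_seq i)))" for y :: 'a
  define p where "p = (a0, c, i, r, m)"
  have bump_p: "bump p y = of_rat a0 + (of_rat c - of_rat a0) * t y" for y
    by (simp add: bump_def p_def t_def)
  have "t x = 1"
  proof -
    have "of_rat r / 2 \<le> max 0 (of_rat r - dist x (dense_seq i))" using i by (simp add: dist_commute le_max_iff_disj)
    then have "real m * (of_rat r / 2) \<le> real m * max 0 (of_rat r - dist x (dense_seq i))"
      by (intro mult_left_mono) auto
    moreover have "1 \<le> real m * (of_rat r / 2)" using m r(1) by (simp add: field_simps)
    ultimately show ?thesis by (simp add: t_def)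
  qed
  moreover have "bump p y \<le> g y" for y
  proof (cases "dist y (dense_seq i) < of_rat r")
    case True
    then have "dist y x < \<delta>" using dist_triangle[of y x "dense_seq i"] i r by linarith
    then have "of_rat c < g y" using \<delta>(2)[of y] by (simp add: dist_real_def abs_less_iff)
    moreover have "t y \<le> 1" by (simp add: t_def)
    moreover have "of_rat a0 < (of_rat c :: real)" using c(1) by linarith
    ultimately show ?thesis unfolding bump_p by (smt (verit) mult_left_le)
  next
    case False
    then show ?thesis using C[of y] a0 by (simp add: bump_p t_def)
  qed
  ultimately show ?thesis using c(1) by (intro exI[of _ p]) (simp add: p_def bump_p[unfolded p_def])
qed

lemma bump_max_approx_from_below:
  fixes g :: "'a::metric_space \<Rightarrow> real"
  assumes sep: "separable_space (euclidean :: 'a topology)" and g: "g \<in> bcontinuous"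
  obtains Ls :: "nat \<Rightarrow> bump_code list" and B where
    "\<And>K y. bump_max (Ls K) y \<le> g y" "\<And>K y. \<bar>bump_max (Ls K) (y :: 'a)\<bar> \<le> B"
    "\<And>x. (\<lambda>K. bump_max (Ls K) x) \<longlonglongrightarrow> g x"
proof -
  obtain C where C: "\<And>y. \<bar>g y\<bar> \<le> C" using g unfolding bcontinuous_def bounded_iff by auto
  obtain a0 :: rat where a0: "- C - 1 < of_rat a0" "of_rat a0 < - C"
    using of_rat_dense[of "- C - 1" "- C"] by auto
  define valid where "valid p \<longleftrightarrow> fst p = a0 \<and> (\<forall>y::'a. bump p y \<le> g y)" for p
  define p0 :: bump_code where "p0 = (a0, a0, 0, 0, 0)"
  have bump_p0: "bump p0 y = of_rat a0" for y :: 'a by (simp add: bump_def p0_def)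
  have "valid p0" unfolding valid_def
  proof (intro conjI allI)
    show "bump p0 y \<le> g y" for y using bump_p0[of y] C[of y] a0 by linarith
  qed (simp add: p0_def)
  define Ls where "Ls K = p0 # filter valid (map from_nat [0..<K])" for K
  have Ls_valid: "valid p" if "p \<in> set (Ls K)" for p K
    using that \<open>valid p0\<close> by (auto simp: Ls_def)
  have below: "bump_max (Ls K) y \<le> g y" for K and y :: 'a
  proof (rule bump_max_le)
    show "bump p y \<le> g y" if "p \<in> set (Ls K)" for p
      using Ls_valid[OF that] by (simp add: valid_def)
  qed (simp add: Ls_def)
  have "of_rat a0 \<le> bump_max (Ls K) y" for K and y :: 'a
    using bump_le_bump_max[of p0 "Ls K" y] by (simp add: Ls_def bump_p0)
  then have bound: "\<bar>bump_max (Ls K) y\<bar> \<le> C + 1" for K and y :: 'a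
    using below[of K y] C[of y] a0 by (smt (verit))
  have lim: "(\<lambda>K. bump_max (Ls K) x) \<longlonglongrightarrow> g x" for x
  proof (rule order_tendstoI)
    fix a assume "a < g x"
    then obtain p where p: "fst p = a0" "\<forall>y. bump p y \<le> g y" "a < bump p x"
      using bump_below_exists[OF sep g C a0(2)] by blast
    then have "p \<in> set (Ls K)" if "to_nat p < K" for K
      using that by (auto simp: Ls_def valid_def image_iff intro!: bexI[of _ "to_nat p"])
    then show "eventually (\<lambda>K. a < bump_max (Ls K) x) sequentially"
      unfolding eventually_sequentially using bump_le_bump_max p(3)
      by (metis Suc_le_eq less_le_trans)
  qed (use below in \<open>auto intro: always_eventually le_less_trans\<close>)
  show ?thesis by (rule that[OF below bound lim])
qed

definition test_fun :: "nat \<Rightarrow> 'a::metric_space \<Rightarrow> real" where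
  "test_fun k = bump_max (from_nat k)"

lemma test_fun_bcontinuous: "test_fun k \<in> bcontinuous"
  by (simp add: test_fun_def bump_max_bcontinuous)

lemma test_fun_lipschitz: "\<exists>C. C-lipschitz_on UNIV (test_fun k :: 'a::metric_space \<Rightarrow> real)"
  by (simp add: test_fun_def bump_max_lipschitz)

lemma test_fun_approx_below:
  fixes g :: "'a::metric_space \<Rightarrow> real"
  assumes sep: "separable_space (euclidean :: 'a topology)" and \<mu>: "\<mu> \<in> borel_probs"
    and g: "g \<in> bcontinuous" and e: "0 < e"
  shows "\<exists>k. (\<forall>y. test_fun k y \<le> g y) \<and> integral\<^sup>L \<mu> g - e < integral\<^sup>L \<mu> (test_fun k)"
proof -
  interpret prob_space \<mu> using \<mu> by (simp add: borel_probs_def)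
  obtain Ls B where below: "\<And>K y. bump_max (Ls K) y \<le> g y"
    and bound: "\<And>K y. \<bar>bump_max (Ls K) (y :: 'a)\<bar> \<le> B" and lim: "\<And>x. (\<lambda>K. bump_max (Ls K) x) \<longlonglongrightarrow> g x"
    using bump_max_approx_from_below[OF sep g] by blast
  have "(\<lambda>K. integral\<^sup>L \<mu> (bump_max (Ls K))) \<longlonglongrightarrow> integral\<^sup>L \<mu> g"
  proof (rule integral_dominated_convergence[where w = "\<lambda>_. B"])
    show "g \<in> borel_measurable \<mu>"
      by (rule borel_probs_measurable[OF \<mu> bcontinuous_borel[OF g]])
    show "bump_max (Ls K) \<in> borel_measurable \<mu>" for K
      by (rule borel_probs_measurable[OF \<mu> bcontinuous_borel[OF bump_max_bcontinuous]])
  qed (use bound lim in simp_all)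
  then have "eventually (\<lambda>K. integral\<^sup>L \<mu> g - e < integral\<^sup>L \<mu> (bump_max (Ls K))) sequentially"
    using e by (intro order_tendstoD) auto
  then obtain K where "integral\<^sup>L \<mu> g - e < integral\<^sup>L \<mu> (bump_max (Ls K))"
    unfolding eventually_sequentially by blast
  then show ?thesis using below by (intro exI[of _ "to_nat (Ls K)"]) (simp add: test_fun_def)
qed

text \<open>Sandwich g between a test function from below and a negated one from above.\<close>
lemma emp_avg_close_if_tests_close:
  fixes g :: "'a::metric_space \<Rightarrow> real"
  assumes sep: "separable_space (euclidean :: 'a topology)" and \<mu>: "\<mu> \<in> borel_probs"
    and g: "g \<in> bcontinuous" and e: "0 < e"
  shows "\<exists>K. \<forall>x n. (\<forall>k<K. \<bar>emp_avg f x n (test_fun k) - integral\<^sup>L \<mu> (test_fun k)\<bar> < e)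
           \<longrightarrow> \<bar>emp_avg f x n g - integral\<^sup>L \<mu> g\<bar> < 2 * e"
proof -
  obtain k1 where k1: "\<forall>y. test_fun k1 y \<le> g y" "integral\<^sup>L \<mu> g - e < integral\<^sup>L \<mu> (test_fun k1)"
    using test_fun_approx_below[OF sep \<mu> g e] by blast
  obtain k2 where k2: "\<forall>y. test_fun k2 y \<le> - g y"
    "integral\<^sup>L \<mu> (\<lambda>y. - g y) - e < integral\<^sup>L \<mu> (test_fun k2)"
    using test_fun_approx_below[OF sep \<mu> bcontinuous_uminus[OF g] e] by blast
  have "\<bar>emp_avg f x n g - integral\<^sup>L \<mu> g\<bar> < 2 * e"
    if close: "\<forall>k<Suc (max k1 k2). \<bar>emp_avg f x n (test_fun k) - integral\<^sup>L \<mu> (test_fun k)\<bar> < e"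
    for x n
  proof -
    have "emp_avg f x n (test_fun k1) \<le> emp_avg f x n g"
      using k1(1) by (simp add: emp_avg_mono)
    moreover have "emp_avg f x n (test_fun k2) \<le> - emp_avg f x n g"
      using emp_avg_mono[of "test_fun k2" "\<lambda>y. - g y"] k2(1) by (simp add: emp_avg_uminus)
    moreover have "\<bar>emp_avg f x n (test_fun k1) - integral\<^sup>L \<mu> (test_fun k1)\<bar> < e"
      "\<bar>emp_avg f x n (test_fun k2) - integral\<^sup>L \<mu> (test_fun k2)\<bar> < e"
      using close by auto
    ultimately show ?thesis using k1(2) k2(2) by (auto simp: abs_less_iff)
  qed
  then show ?thesis by blast
qed

lemma stat_spectrum_if_frequently_close:
  fixes x :: "'a::metric_space"
  assumes sep: "separable_space (euclidean :: 'a topology)" and \<mu>: "\<mu> \<in> borel_probs"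
    and close: "\<And>K e. 0 < e \<Longrightarrow> \<exists>\<^sub>F n in sequentially.
      \<forall>k<K. \<bar>emp_avg f x n (test_fun k) - integral\<^sup>L \<mu> (test_fun k)\<bar> < e"
  shows "\<mu> \<in> stat_spectrum f x"
  unfolding stat_spectrum_def
proof (intro CollectI conjI allI impI \<mu>)
  fix G :: "('a \<Rightarrow> real) set" and e :: real
  assume G: "finite G \<and> G \<subseteq> bcontinuous \<and> 0 < e"
  then have "\<forall>g\<in>G. \<exists>K. \<forall>x n.
      (\<forall>k<K. \<bar>emp_avg f x n (test_fun k) - integral\<^sup>L \<mu> (test_fun k)\<bar> < e / 2)
        \<longrightarrow> \<bar>emp_avg f x n g - integral\<^sup>L \<mu> g\<bar> < e"
    using emp_avg_close_if_tests_close[OF sep \<mu>, of _ "e / 2"] by auto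
  then obtain K where K: "\<forall>g\<in>G. \<forall>x n.
      (\<forall>k<K g. \<bar>emp_avg f x n (test_fun k) - integral\<^sup>L \<mu> (test_fun k)\<bar> < e / 2)
        \<longrightarrow> \<bar>emp_avg f x n g - integral\<^sup>L \<mu> g\<bar> < e"
    by (rule bchoice[THEN exE])
  define N where "N = (\<Sum>g\<in>G. K g)"
  have K_le_N: "K g \<le> N" if "g \<in> G" for g
    unfolding N_def using G that by (intro member_le_sum) auto
  have "\<exists>\<^sub>F n in sequentially. \<forall>k<N. \<bar>emp_avg f x n (test_fun k) - integral\<^sup>L \<mu> (test_fun k)\<bar> < e / 2"
    using close[of "e / 2" N] G by simp
  then show "\<exists>\<^sub>F n in sequentially. \<forall>g\<in>G. \<bar>emp_avg f x n g - integral\<^sup>L \<mu> g\<bar> < e"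
  proof (rule frequently_elim1)
    fix n assume n: "\<forall>k<N. \<bar>emp_avg f x n (test_fun k) - integral\<^sup>L \<mu> (test_fun k)\<bar> < e / 2"
    show "\<forall>g\<in>G. \<bar>emp_avg f x n g - integral\<^sup>L \<mu> g\<bar> < e"
    proof
      fix g assume "g \<in> G"
      then show "\<bar>emp_avg f x n g - integral\<^sup>L \<mu> g\<bar> < e"
        using K n K_le_N[OF \<open>g \<in> G\<close>] by auto
    qed
  qed
qed

lemma basin_if_tests_converge:
  fixes x :: "'a::metric_space"
  assumes sep: "separable_space (euclidean :: 'a topology)" and \<mu>: "\<mu> \<in> borel_probs"
    and lim: "\<And>k. (\<lambda>n. emp_avg f x n (test_fun k)) \<longlonglongrightarrow> integral\<^sup>L \<mu> (test_fun k)"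
  shows "x \<in> basin f \<mu>"
  unfolding basin_def
proof (intro CollectI ballI)
  fix g :: "'a \<Rightarrow> real" assume g: "g \<in> bcontinuous"
  show "(\<lambda>n. emp_avg f x n g) \<longlonglongrightarrow> integral\<^sup>L \<mu> g"
  proof (rule tendstoI)
    fix e :: real assume "0 < e"
    then obtain K where K: "\<And>n. \<forall>k<K. \<bar>emp_avg f x n (test_fun k) - integral\<^sup>L \<mu> (test_fun k)\<bar> < e / 2
        \<Longrightarrow> \<bar>emp_avg f x n g - integral\<^sup>L \<mu> g\<bar> < e"
      using emp_avg_close_if_tests_close[OF sep \<mu> g, of "e / 2" f] by auto
    have "eventually (\<lambda>n. \<forall>k\<in>{..<K}.
        \<bar>emp_avg f x n (test_fun k) - integral\<^sup>L \<mu> (test_fun k)\<bar> < e / 2) sequentially"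
      using tendstoD[OF lim, of "e / 2"] \<open>0 < e\<close> by (intro eventually_ball_finite) (auto simp: dist_real_def)
    then show "eventually (\<lambda>n. dist (emp_avg f x n g) (integral\<^sup>L \<mu> g) < e) sequentially"
      by eventually_elim (simp add: K dist_real_def)
  qed
qed

section \<open>Genericity of the statistical spectrum\<close>

lemma borel_probs_space: "\<mu> \<in> borel_probs \<Longrightarrow> space \<mu> = UNIV"
  using sets_eq_imp_space_eq[of \<mu> borel] by (simp add: borel_probs_def)

lemma outer_pos_AE_witness:
  assumes "\<mu> \<in> borel_probs" "outer_pos \<mu> A" "AE x in \<mu>. P x"
  shows "\<exists>x\<in>A. P x"
proof -
  obtain N where N: "{x \<in> space \<mu>. \<not> P x} \<subseteq> N" "emeasure \<mu> N = 0" "N \<in> sets \<mu>"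
    using assms(3) by (rule AE_E)
  then have "\<not> A \<subseteq> N" using assms(2) by (auto simp: outer_pos_def measure_def)
  then show ?thesis using N(1) borel_probs_space[OF assms(1)] by blast
qed

lemma AE_in_basin:
  fixes f :: "'a::metric_space \<Rightarrow> 'a"
  assumes sep: "separable_space (euclidean :: 'a topology)"
    and erg: "\<mu> \<in> ergodic_probs f" and f: "f \<in> borel_measurable borel"
  shows "AE x in \<mu>. x \<in> basin f \<mu>"
proof -
  have \<mu>: "\<mu> \<in> borel_probs" using erg by (simp add: ergodic_probs_def invariant_probs_def)
  have "AE x in \<mu>. \<forall>k. (\<lambda>n. emp_avg f x n (test_fun k)) \<longlonglongrightarrow> integral\<^sup>L \<mu> (test_fun k)"
    unfolding AE_all_countable
  proof
    fix k
    obtain C where "\<forall>y::'a. \<bar>test_fun k y\<bar> \<le> C"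
      using bcontinuous_bound[OF test_fun_bcontinuous] by blast
    then show "AE x in \<mu>. (\<lambda>n. emp_avg f x n (test_fun k)) \<longlonglongrightarrow> integral\<^sup>L \<mu> (test_fun k)"
      by (intro birkhoff_ergodic[where C = C, OF erg f bcontinuous_borel[OF test_fun_bcontinuous]]) blast
  qed
  then show ?thesis
    by eventually_elim (rule basin_if_tests_converge[OF sep \<mu>], blast)
qed

lemma basin_meets_if_outer_pos:
  fixes f :: "'a::metric_space \<Rightarrow> 'a"
  assumes sep: "separable_space (euclidean :: 'a topology)" and f: "f \<in> borel_measurable borel"
    and erg: "\<mu> \<in> ergodic_probs f" and pos: "outer_pos \<mu> A"
  shows "basin f \<mu> \<inter> A \<noteq> {}"
proof -
  have "\<mu> \<in> borel_probs" using erg by (simp add: ergodic_probs_def invariant_probs_def)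
  then show ?thesis using outer_pos_AE_witness[OF _ pos AE_in_basin[OF sep erg f]] by blast
qed

lemma cesaro_mean_tendsto_zero:
  fixes a :: "nat \<Rightarrow> real"
  assumes nonneg: "\<And>j. 0 \<le> a j" and lim: "a \<longlonglongrightarrow> 0"
  shows "(\<lambda>n. (\<Sum>j<n. a j) / real n) \<longlonglongrightarrow> 0"
proof (rule LIMSEQ_I)
  fix e :: real assume e: "0 < e"
  obtain N where "\<forall>j\<ge>N. norm (a j - 0) < e / 2"
    using LIMSEQ_D[OF lim, of "e / 2"] e by auto
  then have N: "\<And>j. N \<le> j \<Longrightarrow> a j < e / 2" by (auto simp: abs_less_iff)
  define S where "S = (\<Sum>j<N. a j)"
  obtain M :: nat where M: "2 * S / e < real M" using reals_Archimedean2 by blast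
  have "norm ((\<Sum>j<n. a j) / real n - 0) < e" if n: "max (Suc N) (Suc M) \<le> n" for n
  proof -
    have split: "{..<n} = {..<N} \<union> {N..<n}" using n by auto
    have "(\<Sum>j<n. a j) = S + (\<Sum>j\<in>{N..<n}. a j)"
      unfolding S_def split by (rule sum.union_disjoint) auto
    also have "(\<Sum>j\<in>{N..<n}. a j) \<le> real (card {N..<n}) * (e / 2)"
      using N by (intro sum_bounded_above) (auto intro: less_imp_le)
    also have "real (card {N..<n}) * (e / 2) \<le> real n * (e / 2)"
      using e by (intro mult_right_mono) auto
    also have "S < real n * (e / 2)"
    proof -
      have "2 * S / e < real n" using M n by linarith
      then show ?thesis using e by (simp add: field_simps)
    qed
    finally have "(\<Sum>j<n. a j) < real n * e" by (simp add: mult.commute)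
    moreover have "0 \<le> (\<Sum>j<n. a j)" using nonneg by (intro sum_nonneg) auto
    ultimately show ?thesis using n by (simp add: pos_divide_less_eq mult.commute)
  qed
  then show "\<exists>n0. \<forall>n\<ge>n0. norm ((\<Sum>j<n. a j) / real n - 0) < e" by blast
qed

text \<open>The averages along the two orbits differ by at most the Cesaro mean of the null sequence
  C * dist ((f ^^ j) z) ((f ^^ j) y).\<close>
lemma emp_avg_stable_set_tendsto:
  fixes h :: "'a::metric_space \<Rightarrow> real"
  assumes h: "C-lipschitz_on UNIV h" and z: "z \<in> stable_set f y"
    and lim: "(\<lambda>n. emp_avg f y n h) \<longlonglongrightarrow> l"
  shows "(\<lambda>n. emp_avg f z n h) \<longlonglongrightarrow> l"
proof -
  let ?d = "\<lambda>j. C * dist ((f ^^ j) z) ((f ^^ j) y)"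
  have C: "0 \<le> C" using lipschitz_on_nonneg[OF h] .
  have "?d \<longlonglongrightarrow> 0"
    using z tendsto_mult_right_zero[of _ sequentially C] unfolding stable_set_def by auto
  then have mean: "(\<lambda>n. (\<Sum>j<n. ?d j) / real n) \<longlonglongrightarrow> 0"
    using C by (intro cesaro_mean_tendsto_zero) auto
  have "norm (emp_avg f z n h - emp_avg f y n h) \<le> (\<Sum>j<n. ?d j) / real n" for n
  proof -
    have "\<bar>\<Sum>j<n. h ((f ^^ j) z) - h ((f ^^ j) y)\<bar> \<le> (\<Sum>j<n. \<bar>h ((f ^^ j) z) - h ((f ^^ j) y)\<bar>)"
      by (rule sum_abs)
    also have "\<dots> \<le> (\<Sum>j<n. ?d j)"
      using lipschitz_onD[OF h] by (intro sum_mono) (simp add: dist_real_def)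
    finally show ?thesis
      by (simp add: emp_avg_def sum_subtractf diff_divide_distrib[symmetric] abs_divide divide_right_mono)
  qed
  then have "(\<lambda>n. emp_avg f z n h - emp_avg f y n h) \<longlonglongrightarrow> 0"
    by (intro Lim_null_comparison[OF _ mean] always_eventually) auto
  from tendsto_add[OF lim this] show ?thesis by simp
qed

lemma continuous_on_emp_avg:
  assumes f: "continuous_on UNIV f" and h: "continuous_on UNIV h"
  shows "continuous_on UNIV (\<lambda>x. emp_avg f x n h)"
proof -
  have "continuous_on UNIV (f ^^ j)" for j
  proof (induction j)
    case (Suc j)
    have "continuous_on UNIV (f \<circ> (f ^^ j))"
      by (rule continuous_on_compose[OF Suc.IH continuous_on_subset[OF f]]) simp
    then show ?case by simp
  qed (simp add: continuous_on_id')
  then have "continuous_on UNIV (\<lambda>x. h ((f ^^ j) x))" for j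
    using continuous_on_compose[OF _ continuous_on_subset[OF h]] by (auto simp: comp_def)
  then have "continuous_on UNIV (\<lambda>x. (\<Sum>j<n. h ((f ^^ j) x)) * inverse (real n))"
    by (intro continuous_intros) auto
  then show ?thesis unfolding emp_avg_def by (simp add: divide_inverse)
qed

lemma countable_dense_coords:
  fixes \<Phi> :: "'b \<Rightarrow> nat \<Rightarrow> real"
  obtains D where "D \<subseteq> S" "countable D"
    "\<And>\<mu> K e. \<mu> \<in> S \<Longrightarrow> 0 < e \<Longrightarrow> \<exists>\<nu>\<in>D. \<forall>k<K. \<bar>\<Phi> \<nu> k - \<Phi> \<mu> k\<bar> < e"
proof -
  obtain T where T: "countable T" "T \<subseteq> \<Phi> ` S" "\<Phi> ` S \<subseteq> closure T"
    using separable[of "\<Phi> ` S"] by blast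
  define D where "D = inv_into S \<Phi> ` T"
  have "\<exists>\<nu>\<in>D. \<forall>k<K. \<bar>\<Phi> \<nu> k - \<Phi> \<mu> k\<bar> < e" if \<mu>: "\<mu> \<in> S" and e: "0 < e" for \<mu> K e
  proof -
    define U where "U = (\<Inter>k\<in>{..<K}. {v :: nat \<Rightarrow> real. \<bar>v k - \<Phi> \<mu> k\<bar> < e})"
    have "open U"
      unfolding U_def
      by (intro open_INT ballI open_Collect_less continuous_intros continuous_on_product_coordinates) auto
    moreover have "\<Phi> \<mu> \<in> U \<inter> closure T" using \<mu> e T(3) by (auto simp: U_def)
    ultimately obtain t where "t \<in> U" "t \<in> T" using open_Int_closure_eq_empty by blast
    moreover have "\<Phi> (inv_into S \<Phi> t) = t" using T(2) \<open>t \<in> T\<close> by (auto intro: f_inv_into_f)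
    ultimately show ?thesis unfolding D_def U_def by (auto intro!: bexI[of _ t])
  qed
  moreover have "D \<subseteq> S" using T(2) by (auto simp: D_def inv_into_into)
  moreover have "countable D" using T(1) by (simp add: D_def)
  ultimately show ?thesis using that by blast
qed

definition returning_set :: "('a::metric_space \<Rightarrow> 'a) \<Rightarrow> 'a measure \<Rightarrow> nat \<Rightarrow> real \<Rightarrow> nat \<Rightarrow> 'a set"
  where "returning_set f \<nu> K e N =
    {x. \<exists>n\<ge>N. \<forall>k<K. \<bar>emp_avg f x n (test_fun k) - integral\<^sup>L \<nu> (test_fun k)\<bar> < e}"

lemma open_returning_set:
  assumes "continuous_on UNIV f"
  shows "open (returning_set f \<nu> K e N)"
proof -
  have "returning_set f \<nu> K e N = (\<Union>n\<in>{N..}. \<Inter>k\<in>{..<K}.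
      {x. \<bar>emp_avg f x n (test_fun k) - integral\<^sup>L \<nu> (test_fun k)\<bar> < e})"
    unfolding returning_set_def by auto
  moreover have "continuous_on UNIV (\<lambda>x. emp_avg f x n (test_fun k))" for n k
    using assms test_fun_bcontinuous by (intro continuous_on_emp_avg) (auto simp: bcontinuous_def)
  ultimately show ?thesis
    by (auto intro!: open_UN open_INT open_Collect_less continuous_intros)
qed

lemma stable_set_subset_returning_set:
  fixes y :: "'a::metric_space"
  assumes y: "y \<in> basin f \<nu>" and e: "0 < e"
  shows "stable_set f y \<subseteq> returning_set f \<nu> K e N"
proof
  fix z assume z: "z \<in> stable_set f y"
  have lim: "(\<lambda>n. emp_avg f z n (test_fun k)) \<longlonglongrightarrow> integral\<^sup>L \<nu> (test_fun k)" for k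
  proof -
    obtain C where C: "C-lipschitz_on UNIV (test_fun k :: 'a \<Rightarrow> real)"
      using test_fun_lipschitz by blast
    show ?thesis
      using y test_fun_bcontinuous by (intro emp_avg_stable_set_tendsto[OF C z]) (auto simp: basin_def)
  qed
  have "eventually (\<lambda>n. \<forall>k\<in>{..<K}.
      \<bar>emp_avg f z n (test_fun k) - integral\<^sup>L \<nu> (test_fun k)\<bar> < e) sequentially"
    using tendstoD[OF lim e] by (intro eventually_ball_finite) (simp_all add: dist_real_def)
  then obtain n0 where "\<forall>n\<ge>n0. \<forall>k<K. \<bar>emp_avg f z n (test_fun k) - integral\<^sup>L \<nu> (test_fun k)\<bar> < e"
    unfolding eventually_sequentially by auto
  then show "z \<in> returning_set f \<nu> K e N"
    unfolding returning_set_def by (auto intro!: exI[of _ "max n0 N"])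
qed

lemma nowhere_dense_Compl_returning_set:
  assumes f: "continuous_on UNIV f" and y: "y \<in> basin f \<nu>" "closure (stable_set f y) = UNIV"
    and e: "0 < e"
  shows "nowhere_dense (- returning_set f \<nu> K e N)"
proof -
  have "closure (returning_set f \<nu> K e N) = UNIV"
    using closure_mono[OF stable_set_subset_returning_set[OF y(1) e]] y(2) by auto
  then show ?thesis
    using open_returning_set[OF f] by (simp add: nowhere_dense_def closed_Compl interior_complement)
qed

lemma stat_spectrum_if_returning:
  fixes x :: "'a::metric_space"
  assumes sep: "separable_space (euclidean :: 'a topology)" and \<mu>: "\<mu> \<in> borel_probs"
    and dense: "\<And>K e. 0 < e \<Longrightarrow>
      \<exists>\<nu>\<in>D. \<forall>k<K. \<bar>integral\<^sup>L \<nu> (test_fun k) - integral\<^sup>L \<mu> (test_fun k)\<bar> < e"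
    and returning: "\<And>\<nu> K m N. \<nu> \<in> D \<Longrightarrow> x \<in> returning_set f \<nu> K (inverse (Suc m)) N"
  shows "\<mu> \<in> stat_spectrum f x"
proof (rule stat_spectrum_if_frequently_close[OF sep \<mu>])
  fix K and e :: real assume "0 < e"
  then obtain j :: nat where j: "0 < j" "inverse (real j) < e / 2"
    using ex_inverse_of_nat_less[of "e / 2"] by auto
  define m where "m = j - 1"
  have m: "inverse (real (Suc m)) < e / 2" using j by (simp add: m_def)
  obtain \<nu> where \<nu>: "\<nu> \<in> D"
    "\<forall>k<K. \<bar>integral\<^sup>L \<nu> (test_fun k) - integral\<^sup>L \<mu> (test_fun k)\<bar> < e / 2"
    using dense[of "e / 2" K] \<open>0 < e\<close> by auto
  show "\<exists>\<^sub>F n in sequentially. \<forall>k<K. \<bar>emp_avg f x n (test_fun k) - integral\<^sup>L \<mu> (test_fun k)\<bar> < e"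
    unfolding frequently_sequentially
  proof
    fix N
    obtain n where n: "N \<le> n"
      "\<forall>k<K. \<bar>emp_avg f x n (test_fun k) - integral\<^sup>L \<nu> (test_fun k)\<bar> < inverse (Suc m)"
      using returning[OF \<nu>(1), of K m N] by (auto simp: returning_set_def)
    have "\<bar>emp_avg f x n (test_fun k) - integral\<^sup>L \<mu> (test_fun k)\<bar> < e" if "k < K" for k
      using n(2)[rule_format, OF that] \<nu>(2)[rule_format, OF that] m by (simp only: abs_less_iff) linarith
    then show "\<exists>n\<ge>N. \<forall>k<K. \<bar>emp_avg f x n (test_fun k) - integral\<^sup>L \<mu> (test_fun k)\<bar> < e"
      using n(1) by blast
  qed
qed

theorem meager_not_subset_stat_spectrum:
  fixes f :: "'a::metric_space \<Rightarrow> 'a"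
  assumes sep: "separable_space (euclidean :: 'a topology)" and cont: "continuous_on UNIV f"
    and S: "S \<subseteq> borel_probs"
    and stable: "\<And>\<nu>. \<nu> \<in> S \<Longrightarrow> \<exists>y\<in>basin f \<nu>. closure (stable_set f y) = UNIV"
  shows "meager {x. \<not> S \<subseteq> stat_spectrum f x}"
proof -
  obtain D where D: "D \<subseteq> S" "countable D" "\<And>\<mu> K e. \<mu> \<in> S \<Longrightarrow> 0 < e \<Longrightarrow>
      \<exists>\<nu>\<in>D. \<forall>k<K. \<bar>integral\<^sup>L \<nu> (test_fun k) - integral\<^sup>L \<mu> (test_fun k)\<bar> < e"
    using countable_dense_coords[of S "\<lambda>\<mu> k. integral\<^sup>L \<mu> (test_fun k)"] by blast
  define \<F> where "\<F> = (\<lambda>(\<nu>, K, m, N). - returning_set f \<nu> K (inverse (Suc m)) N)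
    ` (D \<times> UNIV \<times> UNIV \<times> UNIV)"
  have "countable \<F>" unfolding \<F>_def using D(2) by simp
  moreover have "nowhere_dense T" if "T \<in> \<F>" for T
  proof -
    from \<open>T \<in> \<F>\<close> obtain \<nu> K m N
      where \<nu>: "\<nu> \<in> D" and T: "T = - returning_set f \<nu> K (inverse (Suc m)) N"
      by (auto simp: \<F>_def)
    obtain y where "y \<in> basin f \<nu>" "closure (stable_set f y) = UNIV"
      using stable \<nu> D(1) by blast
    then show ?thesis unfolding T by (intro nowhere_dense_Compl_returning_set[OF cont]) auto
  qed
  moreover have "S \<subseteq> stat_spectrum f x" if "x \<notin> \<Union>\<F>" for x
  proof
    fix \<mu> assume "\<mu> \<in> S"
    show "\<mu> \<in> stat_spectrum f x"
    proof (rule stat_spectrum_if_returning[OF sep])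
      show "x \<in> returning_set f \<nu> K (inverse (Suc m)) N" if "\<nu> \<in> D" for \<nu> K m N
        using \<open>x \<notin> \<Union>\<F>\<close> that unfolding \<F>_def by blast
    qed (use \<open>\<mu> \<in> S\<close> S D(3) in auto)
  qed
  ultimately show ?thesis unfolding meager_def by blast
qed

theorem proposition5p2:
  fixes f :: "'a::metric_space \<Rightarrow> 'a"
  assumes sep: "separable_space (euclidean :: 'a topology)"
    and baire: "baire_space TYPE('a)"
    and cont: "continuous_on UNIV f"
  defines "X0 \<equiv> {x. closure (stable_set f x) = UNIV}"
  shows "generically (\<lambda>x.
            {\<mu> \<in> invariant_probs f. basin f \<mu> \<inter> X0 \<noteq> {}} \<subseteq> stat_spectrum f x
          \<and> {\<mu> \<in> ergodic_probs f. outer_pos \<mu> X0}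
              \<subseteq> {\<mu> \<in> invariant_probs f. basin f \<mu> \<inter> X0 \<noteq> {}})"
proof -
  define S where "S = {\<mu> \<in> invariant_probs f. basin f \<mu> \<inter> X0 \<noteq> {}}"
  have f: "f \<in> borel_measurable borel" using cont by (rule borel_measurable_continuous_onI)
  have "{\<mu> \<in> ergodic_probs f. outer_pos \<mu> X0} \<subseteq> S"
    using basin_meets_if_outer_pos[OF sep f] by (auto simp: S_def ergodic_probs_def)
  moreover have "meager {x. \<not> S \<subseteq> stat_spectrum f x}"
    by (rule meager_not_subset_stat_spectrum[OF sep cont])
      (auto simp: S_def X0_def invariant_probs_def)
  ultimately show ?thesis unfolding generically_def S_def[symmetric] by simp
qed

end
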